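(* Let $m\ge 1$ and let $q$ be an $m\times m$ matrix each of whose entries is either $0$ or an indeterminate, where the indeterminates occurring in $q$ are pairwise distinct and algebraically independent over a field $F$ ($F=\mathbb{R}$ or $\mathbb{C}$). Suppose that $\det q$, viewed as a polynomial in $F[\text{indeterminates}]$, is irreducible. Then every first minor of $q$ (the determinant of any $(m-1)\times(m-1)$ submatrix obtained by deleting one row and one column; for $m=1$ this is the empty determinant $1$) is a nonzero polynomial. Consequently, for almost all values of the hopping terms, every first minor of $q$ is nonzero.
   Context: In the physical interpretation, $q$ is the off-diagonal block of a chiral tight-binding Hamiltonian $H=\begin{pmatrix}0&q\\ q^\dagger&0\end{pmatrix}$ on a bipartite graph with equal numbers of "black" and "white" sites: rows of $q$ are indexed by one sublattice, columns by the other, and the entry for a pair of sites is an indeterminate (a "hopping term") if the sites are joined by an edge and $0$ otherwise. Deleting a row and a column corresponds to deleting one white and one black site. "For almost all values of the hopping terms" means: for all assignments of values in $F$ to the indeterminates outside the zero set of some nonzero polynomial. *)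

theory Defs
  imports "HOL-Library.Poly_Mapping" "HOL-Library.Product_Lexorder"
    "HOL-Computational_Algebra.Factorial_Ring" "Jordan_Normal_Form.Determinant"
begin

text \<open>Multivariate polynomials over a coefficient ring 'a in indeterminates indexed by
  pairs of naturals (x_(i,j) is the hopping term for row i, column j), represented
  as finitely supported maps from monomials (exponent vectors) to coefficients.\<close>
type_synonym 'a hpoly = "((nat \<times> nat) \<Rightarrow>\<^sub>0 nat) \<Rightarrow>\<^sub>0 'a"

definition hvar :: "nat \<times> nat \<Rightarrow> 'a::comm_semiring_1 hpoly" where
  "hvar v = Poly_Mapping.single (Poly_Mapping.single v 1) 1"

definition pattern_mat :: "nat \<Rightarrow> (nat \<times> nat) set \<Rightarrow> 'a::comm_ring_1 hpoly mat" where
  "pattern_mat m E = mat m m (\<lambda>(i,j). if (i,j) \<in> E then hvar (i,j) else 0)"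

definition heval :: "'a::comm_semiring_1 hpoly \<Rightarrow> (nat \<times> nat \<Rightarrow> 'a) \<Rightarrow> 'a" where
  "heval p x = (\<Sum>mon\<in>Poly_Mapping.keys p.
      Poly_Mapping.lookup p mon * (\<Prod>v\<in>Poly_Mapping.keys mon. x v ^ Poly_Mapping.lookup mon v))"

end

theory Submission
  imports Defs
begin

text \<open>Suppose the first minor of q at (i,j) vanished, and apply Hall's theorem to the rows
  other than i and the columns other than j. If there is a matching, completing it by (i,j)
  gives a permutation \<sigma> with (k, \<sigma> k) an edge for every k \<noteq> i. Replace row i of q by x_(i,j) e_j: the
  determinant of the new matrix is x_(i,j) times the vanishing cofactor, yet setting x_(k,\<sigma> k) = 1
  and all other indeterminates to 0 turns it into a permutation matrix. Otherwise some set T of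
  rows has fewer than |T| neighbours among the columns other than j, so q has a zero block
  T \<times> S with |T| + |S| = m. Such a block factors q = A B with det A and det B both vanishing at
  the origin, hence non-units, contradicting irreducibility. The product of all first minors is
  then a nonzero polynomial outside whose zero set no first minor vanishes.\<close>

section \<open>Hall's marriage theorem\<close>

definition hall_condition :: "('x \<Rightarrow> 'y set) \<Rightarrow> 'x set \<Rightarrow> bool" where
  "hall_condition N X \<longleftrightarrow> (\<forall>T\<subseteq>X. card T \<le> card (\<Union>(N ` T)))"

lemma hall_condition_Diff_tight:
  assumes hall: "hall_condition N X" and fin: "finite X" "\<forall>x\<in>X. finite (N x)"
    and T: "T \<subseteq> X" "card (\<Union>(N ` T)) = card T"
  shows "hall_condition (\<lambda>x. N x - \<Union>(N ` T)) (X - T)"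
  unfolding hall_condition_def
proof (intro allI impI)
  fix U assume U: "U \<subseteq> X - T"
  let ?NT = "\<Union>(N ` T)" and ?NU = "\<Union>x\<in>U. N x - \<Union>(N ` T)"
  have fin_UT: "finite U" "finite T" using U T fin by (auto intro: finite_subset)
  then have fin_N: "finite ?NU" "finite ?NT" using U T(1) fin by (intro finite_UN_I; auto)+
  have "card U + card T = card (U \<union> T)"
    using U fin_UT by (subst card_Un_disjoint) auto
  also have "\<dots> \<le> card (\<Union>(N ` (U \<union> T)))"
    using hall U T(1) unfolding hall_condition_def by blast
  also have "\<Union>(N ` (U \<union> T)) = ?NU \<union> ?NT" by auto
  also have "card (?NU \<union> ?NT) = card ?NU + card T"
    using fin_N T(2) by (subst card_Un_disjoint) auto
  finally show "card U \<le> card ?NU" by simp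
qed

lemma hall_condition_Diff_surplus:
  assumes surplus: "\<And>T. T \<subseteq> X \<Longrightarrow> T \<noteq> {} \<Longrightarrow> T \<noteq> X \<Longrightarrow> card T < card (\<Union>(N ` T))"
    and "x \<in> X"
  shows "hall_condition (\<lambda>z. N z - {y}) (X - {x})"
  unfolding hall_condition_def
proof (intro allI impI)
  fix U assume U: "U \<subseteq> X - {x}"
  show "card U \<le> card (\<Union>z\<in>U. N z - {y})"
  proof (cases "U = {}")
    case False
    then have "card U < card (\<Union>(N ` U))" using surplus[of U] U \<open>x \<in> X\<close> by auto
    moreover have "card (\<Union>(N ` U)) - 1 \<le> card (\<Union>(N ` U) - {y})"
      by (simp add: card_Diff_singleton_if)
    moreover have "(\<Union>z\<in>U. N z - {y}) = \<Union>(N ` U) - {y}" by auto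
    ultimately show ?thesis by simp
  qed simp
qed

definition distinct_representatives :: "('x \<Rightarrow> 'y set) \<Rightarrow> 'x set \<Rightarrow> ('x \<Rightarrow> 'y) \<Rightarrow> bool" where
  "distinct_representatives N X g \<longleftrightarrow> inj_on g X \<and> (\<forall>x\<in>X. g x \<in> N x)"

lemma distinct_representatives_glue:
  assumes g1: "distinct_representatives N T g1"
    and g2: "distinct_representatives (\<lambda>x. N x - \<Union>(N ` T)) (X - T) g2"
    and "T \<subseteq> X"
  shows "distinct_representatives N X (\<lambda>x. if x \<in> T then g1 x else g2 x)"
proof -
  let ?g = "\<lambda>x. if x \<in> T then g1 x else g2 x"
  have "?g ` T \<subseteq> \<Union>(N ` T)" "?g ` (X - T) \<inter> \<Union>(N ` T) = {}"
    using g1 g2 by (auto simp: distinct_representatives_def)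
  then have "inj_on ?g (T \<union> (X - T))"
    using g1 g2 by (subst inj_on_Un) (auto simp: distinct_representatives_def inj_on_def)
  moreover have "T \<union> (X - T) = X" using \<open>T \<subseteq> X\<close> by blast
  ultimately show ?thesis using g1 g2 by (auto simp: distinct_representatives_def)
qed

lemma distinct_representatives_fun_upd:
  assumes "distinct_representatives (\<lambda>z. N z - {y}) (X - {x}) g" "x \<in> X" "y \<in> N x"
  shows "distinct_representatives N X (g(x := y))"
  using assms by (auto simp: distinct_representatives_def inj_on_def)

theorem hall_marriage:
  assumes "finite X" "\<forall>x\<in>X. finite (N x)" "hall_condition N X"
  shows "\<exists>g. distinct_representatives N X g"
  using assms
proof (induction "card X" arbitrary: X N rule: less_induct)
  case less
  note fin = less.prems(1,2) and hall = less.prems(3)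
  show ?case
  proof (cases "\<exists>T. T \<subseteq> X \<and> T \<noteq> {} \<and> T \<noteq> X \<and> card (\<Union>(N ` T)) \<le> card T")
    case True
    then obtain T where T: "T \<subseteq> X" "T \<noteq> {}" "T \<noteq> X" "card (\<Union>(N ` T)) \<le> card T"
      by blast
    have "finite T" using T(1) fin by (auto intro: finite_subset)
    have tight: "card (\<Union>(N ` T)) = card T"
      using hall T unfolding hall_condition_def by (simp add: le_antisym)
    have "card T < card X" using T fin by (auto intro: psubset_card_mono)
    moreover have "card (X - T) = card X - card T" "card T > 0"
      using T \<open>finite T\<close> by (auto simp: card_Diff_subset card_gt_0_iff)
    ultimately have "card (X - T) < card X" by linarith
    obtain g1 where "distinct_representatives N T g1"
      using less.hyps[of T N] \<open>card T < card X\<close> \<open>finite T\<close> T(1) fin hall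
      unfolding hall_condition_def by auto
    moreover obtain g2 where "distinct_representatives (\<lambda>x. N x - \<Union>(N ` T)) (X - T) g2"
      using less.hyps[OF \<open>card (X - T) < card X\<close> _ _ hall_condition_Diff_tight[OF hall fin T(1) tight]]
        fin by auto
    ultimately show ?thesis using T(1) by (blast intro: distinct_representatives_glue)
  next
    case no_tight: False
    show ?thesis
    proof (cases "X = {}")
      case False
      then obtain x where "x \<in> X" by blast
      then have "N x \<noteq> {}"
        using hall[unfolded hall_condition_def, rule_format, of "{x}"] by auto
      then obtain y where "y \<in> N x" by blast
      have "card (X - {x}) < card X" using \<open>x \<in> X\<close> fin by (meson card_Diff1_less)
      have surplus: "\<And>T. T \<subseteq> X \<Longrightarrow> T \<noteq> {} \<Longrightarrow> T \<noteq> X \<Longrightarrow> card T < card (\<Union>(N ` T))"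
        using no_tight by (meson not_le)
      obtain g where "distinct_representatives (\<lambda>z. N z - {y}) (X - {x}) g"
        using less.hyps[OF \<open>card (X - {x}) < card X\<close> _ _
            hall_condition_Diff_surplus[where y = y, OF surplus \<open>x \<in> X\<close>]] fin by auto
      then show ?thesis using \<open>x \<in> X\<close> \<open>y \<in> N x\<close> by (blast intro: distinct_representatives_fun_upd)
    qed (auto simp: distinct_representatives_def)
  qed
qed

section \<open>Evaluation of polynomials\<close>

definition monomial_value :: "((nat \<times> nat) \<Rightarrow>\<^sub>0 nat) \<Rightarrow> (nat \<times> nat \<Rightarrow> 'a) \<Rightarrow> 'a::comm_semiring_1" where
  "monomial_value \<mu> x = (\<Prod>v\<in>Poly_Mapping.keys \<mu>. x v ^ Poly_Mapping.lookup \<mu> v)"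

lemma monomial_value_eq_prod_superset:
  assumes "finite K" "Poly_Mapping.keys \<mu> \<subseteq> K"
  shows "monomial_value \<mu> x = (\<Prod>v\<in>K. x v ^ Poly_Mapping.lookup \<mu> v)"
  unfolding monomial_value_def
  by (rule prod.mono_neutral_left) (use assms in \<open>auto simp: in_keys_iff\<close>)

lemma monomial_value_add: "monomial_value (\<mu> + \<nu>) x = monomial_value \<mu> x * monomial_value \<nu> x"
proof -
  let ?K = "Poly_Mapping.keys \<mu> \<union> Poly_Mapping.keys \<nu>"
  have "monomial_value (\<mu> + \<nu>) x = (\<Prod>v\<in>?K. x v ^ Poly_Mapping.lookup (\<mu> + \<nu>) v)"
    by (rule monomial_value_eq_prod_superset) (auto dest: subsetD[OF keys_add])
  also have "\<dots> = (\<Prod>v\<in>?K. x v ^ Poly_Mapping.lookup \<mu> v) * (\<Prod>v\<in>?K. x v ^ Poly_Mapping.lookup \<nu> v)"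
    by (simp add: lookup_add power_add prod.distrib)
  also have "\<dots> = monomial_value \<mu> x * monomial_value \<nu> x"
    by (simp add: monomial_value_eq_prod_superset[of ?K])
  finally show ?thesis .
qed

lemma heval_eq_sum_monomials:
  "heval p x = (\<Sum>\<mu>\<in>Poly_Mapping.keys p. Poly_Mapping.lookup p \<mu> * monomial_value \<mu> x)"
  unfolding heval_def monomial_value_def ..

lemma heval_zero: "heval 0 x = 0"
  by (simp add: heval_def)

lemma heval_one: "heval 1 x = 1"
  by (simp add: heval_def)

lemma heval_add: "heval (p + q) x = heval p x + heval q x"
  unfolding heval_eq_sum_monomials
  by (rule setsum_keys_plus_distrib) (auto simp: distrib_right)

lemma heval_sum: "heval (sum f A) x = (\<Sum>a\<in>A. heval (f a) x)"
  by (induction A rule: infinite_finite_induct) (simp_all add: heval_zero heval_add)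

lemma heval_single: "heval (Poly_Mapping.single \<mu> c) x = c * monomial_value \<mu> x"
  unfolding heval_eq_sum_monomials by auto

lemma sum_single_lookup: "(\<Sum>\<mu>\<in>Poly_Mapping.keys p. Poly_Mapping.single \<mu> (Poly_Mapping.lookup p \<mu>)) = p"
  by (rule poly_mapping_eqI)
    (auto simp: lookup_sum lookup_single when_def in_keys_iff)

lemma heval_mult: "heval (p * q) x = heval p x * heval q x"
proof -
  let ?s = "\<lambda>r \<mu>. Poly_Mapping.single \<mu> (Poly_Mapping.lookup r \<mu>)"
  have "p * q = (\<Sum>\<mu>\<in>Poly_Mapping.keys p. \<Sum>\<nu>\<in>Poly_Mapping.keys q. ?s p \<mu> * ?s q \<nu>)"
    by (subst (1 2) sum_single_lookup[symmetric]) (simp add: sum_product)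
  then have "heval (p * q) x = (\<Sum>\<mu>\<in>Poly_Mapping.keys p. \<Sum>\<nu>\<in>Poly_Mapping.keys q.
      heval (?s p \<mu>) x * heval (?s q \<nu>) x)"
    by (simp add: heval_sum mult_single heval_single monomial_value_add mult_ac)
  also have "\<dots> = heval p x * heval q x"
    by (subst (3 4) sum_single_lookup[symmetric]) (simp add: heval_sum sum_product)
  finally show ?thesis .
qed

interpretation heval: comm_ring_hom "\<lambda>p. heval p x" for x
  by unfold_locales (simp_all add: heval_zero heval_add heval_mult heval_one)

lemma heval_hvar [simp]: "heval (hvar v) x = x v"
  unfolding hvar_def heval_single monomial_value_def by simp

lemma heval_nonzero_if_unit:
  assumes "p dvd 1" shows "heval p x \<noteq> (0::'a::comm_ring_1)"
proof -
  have "heval p x dvd 1" using assms by (rule heval.hom_dvd_1)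
  then show ?thesis by auto
qed

section \<open>Determinants and zero blocks\<close>

lemma det_perm_indicator_nonzero:
  assumes "inj_on \<sigma> {..<m}" "\<sigma> ` {..<m} \<subseteq> {..<m}"
  shows "det (mat m m (\<lambda>(k,l). if l = \<sigma> k then 1 else 0) :: 'a::idom mat) \<noteq> 0"
proof -
  let ?\<pi> = "restrict_id \<sigma> {..<m}"
  have "bij_betw \<sigma> {..<m} {..<m}"
    using assms by (simp add: bij_betw_def endo_inj_surj)
  then have "?\<pi> permutes {0..<m}"
    by (metis permutes_restrict_id atLeast0LessThan)
  moreover have "mat m m (\<lambda>(k,l). if l = \<sigma> k then 1 else 0) =
      mat m m (\<lambda>(k,l). (1\<^sub>m m :: 'a mat) $$ (?\<pi> k, l))"
    using assms(2) by (intro eq_matI) (auto simp: restrict_id_def)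
  ultimately have "det (mat m m (\<lambda>(k,l). if l = \<sigma> k then 1 else 0) :: 'a mat) = signof ?\<pi>"
    using det_permute_rows[OF one_carrier_mat, of ?\<pi> m] by simp
  then show ?thesis by (cases "evenperm ?\<pi>") (simp_all add: sign_def)
qed

lemma det_eq_cofactor_if_row_single:
  assumes A: "A \<in> carrier_mat m m" and "i < m" "j < m"
    and row: "\<forall>l<m. l \<noteq> j \<longrightarrow> A $$ (i,l) = 0"
  shows "det A = A $$ (i,j) * cofactor A i j"
proof -
  have "det A = (\<Sum>l<m. A $$ (i,l) * cofactor A i l)"
    by (rule laplace_expansion_row[OF A \<open>i < m\<close>])
  also have "\<dots> = (\<Sum>l<m. if l = j then A $$ (i,j) * cofactor A i j else 0)"
    using row by (intro sum.cong) auto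
  finally show ?thesis using \<open>j < m\<close> by simp
qed

lemma heval_det_eq_0_if_row_vanishes:
  assumes A: "A \<in> carrier_mat m m" and "k < m" and row: "\<forall>l<m. heval (A $$ (k,l)) x = 0"
  shows "heval (det A) x = 0"
proof -
  let ?B = "map_mat (\<lambda>p. heval p x) A"
  have "det ?B = (\<Sum>l<m. ?B $$ (k,l) * cofactor ?B k l)"
    using A \<open>k < m\<close> by (intro laplace_expansion_row) auto
  then show ?thesis using A \<open>k < m\<close> row by simp
qed

text \<open>The zero block makes the R-rows of A * B come out
  right.\<close>
lemma zero_block_factorization:
  fixes M :: "'a::comm_ring_1 mat"
  assumes M: "M \<in> carrier_mat m m"
    and RS: "R \<subseteq> {..<m}" "S \<subseteq> {..<m}"
    and \<tau>: "bij_betw \<tau> ({..<m} - R) S"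
    and zero: "\<forall>k\<in>R. \<forall>l\<in>S. M $$ (k,l) = 0"
  obtains A B where "A \<in> carrier_mat m m" "B \<in> carrier_mat m m" "M = A * B"
    "\<forall>k\<in>R. \<forall>l<m. A $$ (k,l) = M $$ (k,l)"
    "\<forall>p\<in>S. \<exists>k<m. \<forall>l<m. B $$ (p,l) = M $$ (k,l)"
proof -
  define \<tau>' where "\<tau>' = inv_into ({..<m} - R) \<tau>"
  have \<tau>S: "\<tau> k \<in> S" and \<tau>'\<tau>: "\<tau>' (\<tau> k) = k" if "k < m" "k \<notin> R" for k
    using \<tau> that by (auto simp: bij_betw_def \<tau>'_def inv_into_f_f)
  have \<tau>'_less: "\<tau>' p < m" if "p \<in> S" for p
    using \<tau> that unfolding \<tau>'_def by (metis Diff_iff bij_betw_def inv_into_into lessThan_iff)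
  define A :: "'a mat" where
    "A = mat m m (\<lambda>(k,l). if k \<in> R then M $$ (k,l) else if l = \<tau> k then 1 else 0)"
  define B :: "'a mat" where
    "B = mat m m (\<lambda>(p,l). if p \<in> S then M $$ (\<tau>' p, l) else if p = l then 1 else 0)"
  have "(A * B) $$ (k,l) = M $$ (k,l)" if kl: "k < m" "l < m" for k l
  proof -
    have "(A * B) $$ (k,l) = (\<Sum>p<m. A $$ (k,p) * B $$ (p,l))"
      using kl by (simp add: A_def B_def scalar_prod_def atLeast0LessThan)
    also have "\<dots> = M $$ (k,l)"
    proof (cases "k \<in> R")
      case True
      then have "(\<Sum>p<m. A $$ (k,p) * B $$ (p,l)) = (\<Sum>p<m. if p = l then M $$ (k,l) else 0)"
        using zero kl by (intro sum.cong) (auto simp: A_def B_def)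
      then show ?thesis using kl by simp
    next
      case False
      then have "(\<Sum>p<m. A $$ (k,p) * B $$ (p,l)) = (\<Sum>p<m. if p = \<tau> k then B $$ (\<tau> k,l) else 0)"
        using kl by (intro sum.cong) (auto simp: A_def)
      then show ?thesis using kl False \<tau>S \<tau>'\<tau> RS(2) by (auto simp: B_def)
    qed
    finally show ?thesis .
  qed
  then have "M = A * B" using M by (intro eq_matI) (auto simp: A_def B_def)
  moreover have "\<forall>p\<in>S. \<exists>k<m. \<forall>l<m. B $$ (p,l) = M $$ (k,l)"
  proof
    fix p assume "p \<in> S"
    then show "\<exists>k<m. \<forall>l<m. B $$ (p,l) = M $$ (k,l)"
      using \<tau>'_less RS(2) by (intro exI[of _ "\<tau>' p"]) (auto simp: B_def)
  qed
  moreover have "\<forall>k\<in>R. \<forall>l<m. A $$ (k,l) = M $$ (k,l)" using RS(1) by (auto simp: A_def)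
  moreover have "A \<in> carrier_mat m m" "B \<in> carrier_mat m m" by (simp_all add: A_def B_def)
  ultimately show ?thesis using that by blast
qed

lemma not_irreducible_det_if_zero_block:
  fixes M :: "'a::comm_ring_1 hpoly mat"
  assumes M: "M \<in> carrier_mat m m"
    and RS: "R \<subseteq> {..<m}" "S \<subseteq> {..<m}" "R \<noteq> {}" "S \<noteq> {}" "card R + card S = m"
    and zero: "\<forall>k\<in>R. \<forall>l\<in>S. M $$ (k,l) = 0"
    and vanish: "\<forall>k<m. \<forall>l<m. heval (M $$ (k,l)) x = 0"
  shows "\<not> irreducible (det M)"
proof
  assume irr: "irreducible (det M)"
  have "card ({..<m} - R) = card S" using RS by (simp add: card_Diff_subset finite_subset)
  then obtain \<tau> where "bij_betw \<tau> ({..<m} - R) S"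
    using RS by (metis finite_Diff finite_lessThan finite_same_card_bij finite_subset)
  obtain A B where A: "A \<in> carrier_mat m m" and B: "B \<in> carrier_mat m m" and "M = A * B"
    and rowsA: "\<forall>k\<in>R. \<forall>l<m. A $$ (k,l) = M $$ (k,l)"
    and rowsB: "\<forall>p\<in>S. \<exists>k<m. \<forall>l<m. B $$ (p,l) = M $$ (k,l)"
    using zero_block_factorization[OF M RS(1,2) \<open>bij_betw \<tau> _ _\<close> zero] .
  obtain k p where "k \<in> R" "p \<in> S" using RS(3,4) by blast
  then obtain k' where "k' < m" "\<forall>l<m. B $$ (p,l) = M $$ (k',l)" using rowsB by blast
  then have "heval (det B) x = 0"
    using \<open>p \<in> S\<close> RS(2) vanish by (intro heval_det_eq_0_if_row_vanishes[OF B, of p]) auto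
  moreover have "heval (det A) x = 0"
    using \<open>k \<in> R\<close> RS(1) rowsA vanish by (intro heval_det_eq_0_if_row_vanishes[OF A, of k]) auto
  moreover have "det M = det A * det B" using \<open>M = A * B\<close> det_mult[OF A B] by simp
  then have "det A dvd 1 \<or> det B dvd 1" using irr irreducibleD by blast
  ultimately show False using heval_nonzero_if_unit by metis
qed

section \<open>First minors of the pattern matrix\<close>

lemma pattern_mat_carrier: "pattern_mat m E \<in> carrier_mat m m"
  by (simp add: pattern_mat_def)

lemma pattern_mat_index:
  "k < m \<Longrightarrow> l < m \<Longrightarrow> pattern_mat m E $$ (k,l) = (if (k,l) \<in> E then hvar (k,l) else 0)"
  by (simp add: pattern_mat_def)

lemma not_irreducible_det_pattern_mat_if_deficient:
  assumes T: "T \<subseteq> {..<m}" "T \<noteq> {}" "card T < m"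
    and deficient: "card {l. l < m \<and> (\<exists>k\<in>T. (k,l) \<in> E)} \<le> card T"
  shows "\<not> irreducible (det (pattern_mat m E :: 'a::comm_ring_1 hpoly mat))"
proof -
  let ?N = "{l. l < m \<and> (\<exists>k\<in>T. (k,l) \<in> E)}"
  have "card ({..<m} - ?N) = m - card ?N" by (subst card_Diff_subset) auto
  then have "m - card T \<le> card ({..<m} - ?N)" using deficient by simp
  then obtain S where S: "S \<subseteq> {..<m} - ?N" "card S = m - card T"
    by (rule obtain_subset_with_card_n)
  show ?thesis
  proof (rule not_irreducible_det_if_zero_block[where R = T and S = S and x = "\<lambda>_. 0"])
    show "\<forall>k\<in>T. \<forall>l\<in>S. pattern_mat m E $$ (k,l) = 0"
    proof (intro ballI)
      fix k l assume "k \<in> T" "l \<in> S"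
      then have "k < m" "l < m" "(k,l) \<notin> E" using S(1) T(1) by auto
      then show "pattern_mat m E $$ (k,l) = 0" by (simp add: pattern_mat_index)
    qed
    show "\<forall>k<m. \<forall>l<m. heval (pattern_mat m E $$ (k,l)) (\<lambda>_. 0) = 0"
      by (simp add: pattern_mat_index)
  qed (use T S in \<open>auto simp: pattern_mat_carrier\<close>)
qed

lemma det_mat_delete_pattern_mat_nonzero_if_matching:
  assumes ij: "i < m" "j < m"
    and \<sigma>: "inj_on \<sigma> {..<m}" "\<sigma> ` {..<m} \<subseteq> {..<m}" "\<sigma> i = j"
    and edges: "\<forall>k<m. k \<noteq> i \<longrightarrow> (k, \<sigma> k) \<in> E"
  shows "det (mat_delete (pattern_mat m E :: 'a::idom hpoly mat) i j) \<noteq> 0"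
proof
  assume minor: "det (mat_delete (pattern_mat m E :: 'a hpoly mat) i j) = 0"
  define Q :: "'a hpoly mat" where "Q = mat m m (\<lambda>(k,l).
      if k = i then (if l = j then hvar (i,j) else 0) else pattern_mat m E $$ (k,l))"
  have "mat_delete Q i j = mat_delete (pattern_mat m E) i j"
    using ij by (intro eq_matI) (auto simp: mat_delete_def Q_def pattern_mat_def)
  then have "det Q = 0"
    using det_eq_cofactor_if_row_single[of Q m i j] ij minor by (simp add: Q_def cofactor_def)
  define x :: "nat \<times> nat \<Rightarrow> 'a" where "x = (\<lambda>(k,l). if l = \<sigma> k then 1 else 0)"
  have "map_mat (\<lambda>p. heval p x) Q = mat m m (\<lambda>(k,l). if l = \<sigma> k then 1 else 0)"
    using \<sigma>(3) edges by (intro eq_matI) (auto simp: Q_def x_def pattern_mat_index)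
  then have "det (mat m m (\<lambda>(k,l). if l = \<sigma> k then 1 else 0) :: 'a mat) = heval (det Q) x"
    by (metis heval.hom_det)
  then have "det (mat m m (\<lambda>(k,l). if l = \<sigma> k then 1 else 0) :: 'a mat) = 0"
    using \<open>det Q = 0\<close> by simp
  then show False using det_perm_indicator_nonzero[OF \<sigma>(1,2)] by blast
qed

lemma det_mat_delete_pattern_mat_nonzero:
  assumes irr: "irreducible (det (pattern_mat m E :: 'a::idom hpoly mat))"
    and ij: "i < m" "j < m"
  shows "det (mat_delete (pattern_mat m E :: 'a hpoly mat) i j) \<noteq> 0"
proof -
  define N where "N k = {l \<in> {..<m} - {j}. (k,l) \<in> E}" for k
  show ?thesis
  proof (cases "hall_condition N ({..<m} - {i})")
    case True
    then obtain g where g: "inj_on g ({..<m} - {i})" "\<forall>k\<in>{..<m} - {i}. g k \<in> N k"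
      using hall_marriage[of "{..<m} - {i}" N] by (auto simp: N_def distinct_representatives_def)
    have "j \<notin> g ` ({..<m} - {i})" using g(2) by (auto simp: N_def)
    have "inj_on (g(i := j)) {..<m}"
    proof (rule inj_onI)
      fix a b assume "a \<in> {..<m}" "b \<in> {..<m}" "(g(i := j)) a = (g(i := j)) b"
      then show "a = b"
        using g(1) \<open>j \<notin> g ` ({..<m} - {i})\<close> by (cases "a = i"; cases "b = i") (auto dest: inj_onD)
    qed
    then show ?thesis
      using ij g by (intro det_mat_delete_pattern_mat_nonzero_if_matching[where \<sigma> = "g(i := j)"])
        (auto simp: N_def)
  next
    case False
    then obtain T where T: "T \<subseteq> {..<m} - {i}" "card (\<Union>(N ` T)) < card T"
      by (auto simp: hall_condition_def not_le)
    have "finite (\<Union>(N ` T))" by (rule finite_subset[of _ "{..<m}"]) (auto simp: N_def)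
    have "{l. l < m \<and> (\<exists>k\<in>T. (k,l) \<in> E)} \<subseteq> insert j (\<Union>(N ` T))" by (auto simp: N_def)
    then have "card {l. l < m \<and> (\<exists>k\<in>T. (k,l) \<in> E)} \<le> card (insert j (\<Union>(N ` T)))"
      using \<open>finite (\<Union>(N ` T))\<close> by (intro card_mono) auto
    also have "\<dots> \<le> card T"
      using \<open>finite (\<Union>(N ` T))\<close> T(2) by (simp add: card_insert_if)
    finally have "card {l. l < m \<and> (\<exists>k\<in>T. (k,l) \<in> E)} \<le> card T" .
    moreover have "card T \<le> card ({..<m} - {i})" using T(1) by (intro card_mono) auto
    then have "card T < m" using ij by simp
    moreover have "T \<noteq> {}" "T \<subseteq> {..<m}" using T by auto
    ultimately show ?thesis
      using not_irreducible_det_pattern_mat_if_deficient[of T m E] irr by blast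
  qed
qed

theorem mainTheorem1:
  fixes m :: nat and E :: "(nat \<times> nat) set"
  assumes "m \<ge> 1"
    and "E \<subseteq> {..<m} \<times> {..<m}"
    and "irreducible (det (pattern_mat m E :: 'a::{field, real_normed_field} hpoly mat))"
  shows "(\<forall>i<m. \<forall>j<m. det (mat_delete (pattern_mat m E :: 'a hpoly mat) i j) \<noteq> 0)
    \<and> (\<exists>P :: 'a hpoly. P \<noteq> 0 \<and>
         (\<forall>x. heval P x \<noteq> 0 \<longrightarrow>
            (\<forall>i<m. \<forall>j<m. heval (det (mat_delete (pattern_mat m E :: 'a hpoly mat) i j)) x \<noteq> 0)))"
proof -
  have minors: "\<forall>i<m. \<forall>j<m. det (mat_delete (pattern_mat m E :: 'a hpoly mat) i j) \<noteq> 0"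
    using det_mat_delete_pattern_mat_nonzero[OF assms(3)] by simp
  define P :: "'a hpoly" where "P = (\<Prod>(i,j)\<in>{..<m} \<times> {..<m}. det (mat_delete (pattern_mat m E) i j))"
  have "P \<noteq> 0" using minors by (auto simp: P_def prod_zero_iff)
  moreover have "heval P x = (\<Prod>(i,j)\<in>{..<m} \<times> {..<m}. heval (det (mat_delete (pattern_mat m E) i j)) x)"
    for x unfolding P_def heval.hom_prod by (simp add: case_prod_beta')
  ultimately show ?thesis using minors by (auto simp: prod_zero_iff)
qed

end
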